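(* Assume $(X,T)$ has the b.i.p.-property. Then for every $a\in\mathcal W^1$ and a.e. $\omega\in\Omega_a$ there exist $\alpha_\omega,\beta_\omega\in\mathbb N$ such that (i) $\mathcal W^n_\omega(a,b)\ne\emptyset$ for all $n\ge\alpha_\omega$ and all $b\in\mathcal W^1_{\theta^n\omega}$; (ii) $\mathcal W^n_{\theta^{-n}\omega}(b,a)\ne\emptyset$ for all $n\ge\beta_\omega$ and all $b\in\mathcal W^1_{\theta^{-n}\omega}$.
   Context: Let $(\Omega,\mathcal F,P)$ be a probability space and $\theta:\Omega\to\Omega$ an invertible, bimeasurable, $P$-preserving, ergodic map. Let $\ell:\Omega\to\mathbb N\cup\{\infty\}$ be measurable with $\ell_\omega>1$, and for a.e. $\omega$ let $A_\omega=(\alpha_{ij}(\omega))_{0\le i<\ell_\omega,\,0\le j<\ell_{\theta\omega}}$ be a $\{0,1\}$-matrix depending measurably on $\omega$ such that every row contains an entry $1$. Put $X_\omega=\{x=(x_0,x_1,\dots): x_i<\ell_{\theta^i\omega},\ \alpha_{x_ix_{i+1}}(\theta^i\omega)=1\ \forall i\ge0\}$, $T_\omega:X_\omega\to X_{\theta\omega}$ the left shift, $T^n_\omega=T_{\theta^{n-1}\omega}\circ\cdots\circ T_\omega$. A word $w=(w_0,\dots,w_{n-1})$ is $\omega$-admissible if $w_i<\ell_{\theta^i\omega}$ for all $i<n$ and $\alpha_{w_iw_{i+1}}(\theta^i\omega)=1$ for $i<n-1$; $\mathcal W^n_\omega$ is the set of such words of length $n$ (so $\mathcal W^1_\omega=\{c: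 c<\ell_\omega\}$); $[w]_\omega=\{x\in X_\omega: x_i=w_i,\ i<n\}$; $\Omega_w=\{\omega: w\in\mathcal W^n_\omega\}$; $\mathcal W^n$ is the set of words $w$ of length $n$ with $P(\Omega_w)>0$. For $a,b$, $\mathcal W^n_\omega(a,b)=\{w\in\mathcal W^n_\omega: w_0=a,\ \alpha_{w_{n-1}b}(\theta^{n-1}\omega)=1\}$. $(X,T)$ is topologically mixing if for all $a,b\in\mathcal W^1$ there is an $\mathbb N$-valued random variable $N_{ab}$ with $[a]_\omega\cap(T^n_\omega)^{-1}[b]_{\theta^n\omega}\ne\emptyset$ whenever $\omega\in\Omega_a$, $n\ge N_{ab}(\omega)$, $\theta^n\omega\in\Omega_b$. Big image property: there exist a measurable $\Omega_{bi}\subset\Omega$ with $P(\Omega_{bi})>0$ and finite sets $\mathcal I^\omega_{bi}\subset\mathcal W^1_\omega$ ($\omega\in\Omega_{bi}$) such that for every $c\in\mathcal W^1_{\theta^{-1}\omega}$ there is $b\in\mathcal I^\omega_{bi}$ with $\alpha_{cb}(\theta^{-1}\omega)=1$. Big preimage property: there exist a measurable $\Omega_{bp}\subset\Omega$ with $P(\Omega_{bp})>0$ and finite sets $\mathcal I^\omega_{bp}\subset\mathcal W^1_{\theta^{-1}\omega}$ ($\omega\in\Omega_{bp}$) such that for every $c\in\mathcal W^1_\omega$ there is $b\in\mathcal I^\omega_{bp}$ with $\alpha_{bc}(\theta^{-1}\omega)=1$. (Without loss of generality the sets $\mathcal I^\omega_{bi}$, resp. $\mathcal I^\omega_{bp}$,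 are contained in a fixed finite set.) $(X,T)$ has the b.i.p.-property if it is topologically mixing and has both the big image and big preimage property. *)

theory Defs
  imports "HOL-Probability.Probability"
begin

text \<open>The alphabet size
  is l :: 'w => enat (the value \<infinity> allowed); the random transition matrix is
  encoded as a boolean predicate Amat w i j (true iff alpha_ij(w) = 1).
  Symbols are natural numbers; a symbol c is in W^1_w iff enat c < l w.\<close>

definition thinv :: "'w measure \<Rightarrow> ('w \<Rightarrow> 'w) \<Rightarrow> 'w \<Rightarrow> 'w" where
  "thinv M th = inv_into (space M) th"

definition invertible_mp_ergodic :: "'w measure \<Rightarrow> ('w \<Rightarrow> 'w) \<Rightarrow> bool" where
  "invertible_mp_ergodic M th \<longleftrightarrow>
     prob_space M \<and>
     bij_betw th (space M) (space M) \<and>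
     th \<in> measurable M M \<and> thinv M th \<in> measurable M M \<and>
     distr M M th = M \<and>
     (\<forall>A\<in>sets M. th -` A \<inter> space M = A \<longrightarrow> measure M A = 0 \<or> measure M A = 1)"

definition rsft_setting ::
  "'w measure \<Rightarrow> ('w \<Rightarrow> 'w) \<Rightarrow> ('w \<Rightarrow> enat) \<Rightarrow> ('w \<Rightarrow> nat \<Rightarrow> nat \<Rightarrow> bool) \<Rightarrow> bool" where
  "rsft_setting M th l Amat \<longleftrightarrow>
     invertible_mp_ergodic M th \<and>
     l \<in> measurable M (count_space UNIV) \<and>
     (\<forall>w\<in>space M. l w > 1) \<and>
     (\<forall>i j. {w\<in>space M. Amat w i j} \<in> sets M) \<and>
     (AE w in M. \<forall>i. enat i < l w \<longrightarrow> (\<exists>j. enat j < l (th w) \<and> Amat w i j))"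

definition fibre :: "('w \<Rightarrow> 'w) \<Rightarrow> ('w \<Rightarrow> enat) \<Rightarrow> ('w \<Rightarrow> nat \<Rightarrow> nat \<Rightarrow> bool) \<Rightarrow> 'w \<Rightarrow> (nat \<Rightarrow> nat) set" where
  "fibre th l Amat w = {x. \<forall>i. enat (x i) < l ((th ^^ i) w) \<and> Amat ((th ^^ i) w) (x i) (x (Suc i))}"

definition shiftn :: "nat \<Rightarrow> (nat \<Rightarrow> nat) \<Rightarrow> (nat \<Rightarrow> nat)" where
  "shiftn n x = (\<lambda>i. x (i + n))"

definition admissible :: "('w \<Rightarrow> 'w) \<Rightarrow> ('w \<Rightarrow> enat) \<Rightarrow> ('w \<Rightarrow> nat \<Rightarrow> nat \<Rightarrow> bool) \<Rightarrow> 'w \<Rightarrow> nat list \<Rightarrow> bool" where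
  "admissible th l Amat w u \<longleftrightarrow>
     (\<forall>i<length u. enat (u ! i) < l ((th ^^ i) w)) \<and>
     (\<forall>i. Suc i < length u \<longrightarrow> Amat ((th ^^ i) w) (u ! i) (u ! Suc i))"

definition cylinder :: "('w \<Rightarrow> 'w) \<Rightarrow> ('w \<Rightarrow> enat) \<Rightarrow> ('w \<Rightarrow> nat \<Rightarrow> nat \<Rightarrow> bool) \<Rightarrow> 'w \<Rightarrow> nat list \<Rightarrow> (nat \<Rightarrow> nat) set" where
  "cylinder th l Amat w u = {x \<in> fibre th l Amat w. \<forall>i<length u. x i = u ! i}"

definition words :: "('w \<Rightarrow> 'w) \<Rightarrow> ('w \<Rightarrow> enat) \<Rightarrow> ('w \<Rightarrow> nat \<Rightarrow> nat \<Rightarrow> bool) \<Rightarrow> nat \<Rightarrow> 'w \<Rightarrow> nat list set" where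
  "words th l Amat n w = {u. length u = n \<and> admissible th l Amat w u}"

text \<open>W^n_w(a,b) (for n = 0 this is empty, as the word must have a first letter a).\<close>
definition words_ab :: "('w \<Rightarrow> 'w) \<Rightarrow> ('w \<Rightarrow> enat) \<Rightarrow> ('w \<Rightarrow> nat \<Rightarrow> nat \<Rightarrow> bool) \<Rightarrow> nat \<Rightarrow> 'w \<Rightarrow> nat \<Rightarrow> nat \<Rightarrow> nat list set" where
  "words_ab th l Amat n w a b =
     {u \<in> words th l Amat n w. u \<noteq> [] \<and> hd u = a \<and> Amat ((th ^^ (n - 1)) w) (last u) b}"

definition Omega_w :: "'w measure \<Rightarrow> ('w \<Rightarrow> 'w) \<Rightarrow> ('w \<Rightarrow> enat) \<Rightarrow> ('w \<Rightarrow> nat \<Rightarrow> nat \<Rightarrow> bool) \<Rightarrow> nat list \<Rightarrow> 'w set" where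
  "Omega_w M th l Amat u = {w \<in> space M. admissible th l Amat w u}"

definition in_W1 :: "'w measure \<Rightarrow> ('w \<Rightarrow> 'w) \<Rightarrow> ('w \<Rightarrow> enat) \<Rightarrow> ('w \<Rightarrow> nat \<Rightarrow> nat \<Rightarrow> bool) \<Rightarrow> nat \<Rightarrow> bool" where
  "in_W1 M th l Amat a \<longleftrightarrow> measure M (Omega_w M th l Amat [a]) > 0"

definition top_mixing :: "'w measure \<Rightarrow> ('w \<Rightarrow> 'w) \<Rightarrow> ('w \<Rightarrow> enat) \<Rightarrow> ('w \<Rightarrow> nat \<Rightarrow> nat \<Rightarrow> bool) \<Rightarrow> bool" where
  "top_mixing M th l Amat \<longleftrightarrow>
     (\<forall>a b. in_W1 M th l Amat a \<longrightarrow> in_W1 M th l Amat b \<longrightarrow>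
        (\<exists>N :: 'w \<Rightarrow> nat. N \<in> measurable M (count_space UNIV) \<and>
          (\<forall>w \<in> Omega_w M th l Amat [a]. \<forall>n \<ge> N w.
              (th ^^ n) w \<in> Omega_w M th l Amat [b] \<longrightarrow>
              cylinder th l Amat w [a] \<inter> (shiftn n -` cylinder th l Amat ((th ^^ n) w) [b]) \<noteq> {})))"

definition big_image :: "'w measure \<Rightarrow> ('w \<Rightarrow> 'w) \<Rightarrow> ('w \<Rightarrow> enat) \<Rightarrow> ('w \<Rightarrow> nat \<Rightarrow> nat \<Rightarrow> bool) \<Rightarrow> bool" where
  "big_image M th l Amat \<longleftrightarrow>
     (\<exists>Obi \<in> sets M. measure M Obi > 0 \<and>
       (\<exists>I :: 'w \<Rightarrow> nat set. \<forall>w \<in> Obi.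
          finite (I w) \<and> (\<forall>b \<in> I w. enat b < l w) \<and>
          (\<forall>c. enat c < l (thinv M th w) \<longrightarrow> (\<exists>b \<in> I w. Amat (thinv M th w) c b))))"

definition big_preimage :: "'w measure \<Rightarrow> ('w \<Rightarrow> 'w) \<Rightarrow> ('w \<Rightarrow> enat) \<Rightarrow> ('w \<Rightarrow> nat \<Rightarrow> nat \<Rightarrow> bool) \<Rightarrow> bool" where
  "big_preimage M th l Amat \<longleftrightarrow>
     (\<exists>Obp \<in> sets M. measure M Obp > 0 \<and>
       (\<exists>I :: 'w \<Rightarrow> nat set. \<forall>w \<in> Obp.
          finite (I w) \<and> (\<forall>b \<in> I w. enat b < l (thinv M th w)) \<and>
          (\<forall>c. enat c < l w \<longrightarrow> (\<exists>b \<in> I w. Amat (thinv M th w) b c))))"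

definition bip_property :: "'w measure \<Rightarrow> ('w \<Rightarrow> 'w) \<Rightarrow> ('w \<Rightarrow> enat) \<Rightarrow> ('w \<Rightarrow> nat \<Rightarrow> nat \<Rightarrow> bool) \<Rightarrow> bool" where
  "bip_property M th l Amat \<longleftrightarrow>
     top_mixing M th l Amat \<and> big_image M th l Amat \<and> big_preimage M th l Amat"

end

theory Submission
  imports Defs
begin

(* Both statements are obtained by
   gluing two admissible paths through a "gate": a fibre at which a bounded set of symbols
   {0..K} suffices to connect every symbol to the previous (big preimage) resp. from the
   previous fibre (big image).  Such gates have positive measure for some K, so by Poincare
   recurrence for the ergodic map theta (resp. theta^-1) almost every orbit passes through them
   at arbitrarily late times.
   (i)  Pass a gate at time m+1 after all mixing times from a to the symbols 0..K have elapsed: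
        a mixing path from a to a gate symbol d at time m, followed by an admissible past of b
        starting at time m+1, gives a word of W^n(a,b).  Admissible pasts of every length exist
        almost surely, again by mixing and recurrence (admissible_pasts).
   (ii) Pass a gate at time -j, with j beyond the mixing times from 0..K to a there: extend
        b forward (every row of the matrix contains a 1) up to time -j-1, step into a gate
        symbol d and use the mixing path from d to a. *)

lemma measurable_funpow: "f \<in> measurable M M \<Longrightarrow> f ^^ n \<in> measurable M M"
  by (induction n) (auto simp: funpow_swap1)

lemma distr_funpow:
  assumes f: "f \<in> measurable M M" and preserving: "distr M M f = M"
  shows "distr M M (f ^^ n) = M"
proof (induction n)
  case 0
  then show ?case by (simp add: distr_id[unfolded id_def])
next
  case (Suc n)
  have "distr M M (f ^^ Suc n) = distr M M ((f ^^ n) \<circ> f)" by (simp only: funpow_Suc_right)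
  also have "\<dots> = distr (distr M M f) M (f ^^ n)"
    using distr_distr[OF measurable_funpow[OF f] f] by simp
  also have "\<dots> = M" using preserving Suc by simp
  finally show ?case .
qed

lemma AE_along_orbit:
  assumes f: "f \<in> measurable M M" and preserving: "distr M M f = M"
    and ae: "AE x in M. P x"
  shows "AE x in M. \<forall>n. P ((f ^^ n) x)"
proof -
  have "AE x in M. P ((f ^^ n) x)" for n
  proof (rule AE_distrD[OF measurable_funpow[OF f]])
    show "AE x in distr M M (f ^^ n). P x" by (subst distr_funpow[OF f preserving]) (rule ae)
  qed
  then show ?thesis by (simp add: AE_all_countable)
qed

lemma (in finite_measure) positive_measure_cover:
  assumes S: "S \<in> sets M" "measure M S > 0" and A: "\<And>K. A K \<in> sets M"
    and cover: "S \<subseteq> (\<Union>K::nat. A K)"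
  shows "\<exists>K. measure M (A K) > 0"
proof (rule ccontr)
  assume "\<not> ?thesis"
  then have "measure M (A K) = 0" for K
    using measure_nonneg[of M "A K"] by (meson not_less order.antisym)
  then have "A K \<in> null_sets M" for K using A by (simp add: emeasure_eq_measure null_sets_def)
  then have "(\<Union>K. A K) \<in> null_sets M" by blast
  then have "S \<in> null_sets M" using S(1) cover by (rule null_sets_subset)
  then show False using S(2) by (simp add: null_sets_def emeasure_eq_measure)
qed

definition ergodic_mp :: "'a measure \<Rightarrow> ('a \<Rightarrow> 'a) \<Rightarrow> bool" where
  "ergodic_mp M f \<longleftrightarrow> f \<in> measurable M M \<and> distr M M f = M \<and>
     (\<forall>A\<in>sets M. f -` A \<inter> space M = A \<longrightarrow> measure M A = 0 \<or> measure M A = 1)"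

lemma ergodic_mp_inverse:
  assumes erg: "ergodic_mp M f" and g: "g \<in> measurable M M"
    and gf: "\<And>x. x \<in> space M \<Longrightarrow> g (f x) = x" and fg: "\<And>x. x \<in> space M \<Longrightarrow> f (g x) = x"
  shows "ergodic_mp M g"
proof -
  have f: "f \<in> measurable M M" and preserving: "distr M M f = M"
    using erg by (auto simp: ergodic_mp_def)
  have f_space: "x \<in> space M \<Longrightarrow> f x \<in> space M" for x using f by (rule measurable_space)
  have g_space: "x \<in> space M \<Longrightarrow> g x \<in> space M" for x using g by (rule measurable_space)
  have "emeasure (distr M M g) A = emeasure M A" if A: "A \<in> sets M" for A
  proof -
    have "f -` (g -` A \<inter> space M) \<inter> space M = A"
      using sets.sets_into_space[OF A] by (auto simp: gf f_space)
    then have "emeasure M A = emeasure (distr M M f) (g -` A \<inter> space M)"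
      using A by (simp add: emeasure_distr[OF f] measurable_sets[OF g])
    then show ?thesis using A preserving by (simp add: emeasure_distr[OF g])
  qed
  then have g_preserving: "distr M M g = M" by (intro measure_eqI) auto
  have invariant_f: "f -` A \<inter> space M = A"
    if A: "A \<subseteq> space M" and invariant: "g -` A \<inter> space M = A" for A
  proof (intro set_eqI iffI)
    fix x assume x: "x \<in> f -` A \<inter> space M"
    have "f x \<in> g -` A \<inter> space M" using x unfolding invariant by simp
    then show "x \<in> A" using x by (simp add: gf)
  next
    fix x assume x: "x \<in> A"
    then have x_space: "x \<in> space M" using A by auto
    then have "f x \<in> g -` A \<inter> space M" using x by (simp add: gf f_space)
    then have "f x \<in> A" unfolding invariant .
    then show "x \<in> f -` A \<inter> space M" using x_space by simp
  qed
  have g_ergodic: "measure M A = 0 \<or> measure M A = 1"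
    if A: "A \<in> sets M" and invariant: "g -` A \<inter> space M = A" for A
  proof -
    have "f -` A \<inter> space M = A" by (rule invariant_f[OF sets.sets_into_space[OF A] invariant])
    then show ?thesis using erg A unfolding ergodic_mp_def by blast
  qed
  show ?thesis unfolding ergodic_mp_def by (intro conjI ballI impI g g_preserving g_ergodic)
qed

text \<open>Points whose orbit meets B at some time n \<ge> m.  Pulling back along f shifts m by one,
  so all these sets have the same measure.\<close>

definition visits_after :: "'a measure \<Rightarrow> ('a \<Rightarrow> 'a) \<Rightarrow> 'a set \<Rightarrow> nat \<Rightarrow> 'a set" where
  "visits_after M f B m = {x \<in> space M. \<exists>n\<ge>m. (f ^^ n) x \<in> B}"

lemma visits_after_sets:
  "f \<in> measurable M M \<Longrightarrow> B \<in> sets M \<Longrightarrow> visits_after M f B m \<in> sets M"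
proof -
  assume f: "f \<in> measurable M M" and B: "B \<in> sets M"
  have "visits_after M f B m = (\<Union>n\<in>{m..}. (f ^^ n) -` B \<inter> space M)"
    unfolding visits_after_def by auto
  also have "\<dots> \<in> sets M" using measurable_sets[OF measurable_funpow[OF f] B]
    by (intro sets.countable_UN') auto
  finally show ?thesis .
qed

lemma visits_after_preimage:
  assumes "f \<in> measurable M M"
  shows "f -` visits_after M f B m \<inter> space M = visits_after M f B (Suc m)"
proof -
  have "(\<exists>n\<ge>m. (f ^^ n) (f x) \<in> B) \<longleftrightarrow> (\<exists>n\<ge>Suc m. (f ^^ n) x \<in> B)" for x
  proof
    assume "\<exists>n\<ge>m. (f ^^ n) (f x) \<in> B"
    then obtain n where "n \<ge> m" "(f ^^ n) (f x) \<in> B" by blast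
    then show "\<exists>n\<ge>Suc m. (f ^^ n) x \<in> B" by (intro exI[of _ "Suc n"]) (simp add: funpow_swap1)
  next
    assume "\<exists>n\<ge>Suc m. (f ^^ n) x \<in> B"
    then obtain n where "n \<ge> m" "(f ^^ Suc n) x \<in> B" by (metis Suc_le_D Suc_le_mono)
    then show "\<exists>n\<ge>m. (f ^^ n) (f x) \<in> B" by (auto simp: funpow_swap1)
  qed
  then show ?thesis
    using measurable_space[OF assms] unfolding visits_after_def by auto
qed

lemma visits_after_measure:
  assumes f: "f \<in> measurable M M" and preserving: "distr M M f = M" and B: "B \<in> sets M"
  shows "measure M (visits_after M f B m) = measure M (visits_after M f B 0)"
proof (induction m)
  case (Suc m)
  have "measure M (visits_after M f B (Suc m)) = measure (distr M M f) (visits_after M f B m)"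
    using measure_distr[OF f visits_after_sets[OF f B]] visits_after_preimage[OF f] by simp
  then show ?case using preserving Suc by simp
qed simp

theorem ergodic_recurrence:
  assumes ps: "prob_space M" and erg: "ergodic_mp M f"
    and B: "B \<in> sets M" "measure M B > 0"
  shows "AE x in M. \<forall>m. \<exists>n\<ge>m. (f ^^ n) x \<in> B"
proof -
  interpret prob_space M by (rule ps)
  have f: "f \<in> measurable M M" and preserving: "distr M M f = M"
    using erg by (auto simp: ergodic_mp_def)
  define U where "U = visits_after M f B"
  have U_sets: "U m \<in> sets M" for m unfolding U_def by (rule visits_after_sets[OF f B(1)])
  have U_dec: "decseq U" unfolding decseq_def U_def visits_after_def by (auto intro: order_trans)
  have U_measure: "measure M (U m) = measure M (U 0)" for m
    unfolding U_def by (rule visits_after_measure[OF f preserving B(1)])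
  define V where "V = (\<Inter>m. U m)"
  have V_sets: "V \<in> sets M" using U_sets by (auto simp: V_def)
  have "(\<lambda>m. measure M (U m)) \<longlonglongrightarrow> measure M V"
    unfolding V_def by (rule finite_Lim_measure_decseq) (use U_sets U_dec in auto)
  moreover have "(\<lambda>m. measure M (U m)) = (\<lambda>_. measure M (U 0))" using U_measure by (rule ext)
  ultimately have V_measure: "measure M V = measure M (U 0)" by (simp add: LIMSEQ_const_iff)
  have "B \<subseteq> U 0"
    using sets.sets_into_space[OF B(1)] by (auto simp: U_def visits_after_def intro!: exI[of _ 0])
  then have "measure M B \<le> measure M (U 0)" by (intro finite_measure_mono U_sets)
  then have V_pos: "measure M V > 0" using B(2) V_measure by simp
  have "f -` V \<inter> space M = (\<Inter>m. f -` U m \<inter> space M)" by (auto simp: V_def)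
  also have "\<dots> = (\<Inter>m. U (Suc m))" by (simp only: U_def visits_after_preimage[OF f])
  also have "\<dots> = V"
  proof
    show "(\<Inter>m. U (Suc m)) \<subseteq> V" using U_dec unfolding V_def decseq_Suc_iff by blast
    show "V \<subseteq> (\<Inter>m. U (Suc m))" unfolding V_def by blast
  qed
  finally have "measure M V = 0 \<or> measure M V = 1"
    using erg V_sets unfolding ergodic_mp_def by blast
  then have "AE x in M. x \<in> V" using V_pos by (intro AE_prob_1) simp
  then show ?thesis
  proof eventually_elim
    case (elim x)
    then show ?case unfolding V_def U_def visits_after_def by blast
  qed
qed

lemma funpow_apply_add: "(f ^^ i) ((f ^^ j) x) = (f ^^ (i + j)) x"
  by (simp add: funpow_add)

lemma funpow_cancel:
  assumes g_closed: "\<And>x. x \<in> S \<Longrightarrow> g x \<in> S" and fg: "\<And>x. x \<in> S \<Longrightarrow> f (g x) = x"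
    and "x \<in> S" "i \<le> n"
  shows "(f ^^ i) ((g ^^ n) x) = (g ^^ (n - i)) x"
  using \<open>i \<le> n\<close>
proof (induction i)
  case (Suc i)
  have closed: "(g ^^ k) x \<in> S" for k by (induction k) (auto simp: \<open>x \<in> S\<close> g_closed)
  have "(f ^^ Suc i) ((g ^^ n) x) = f ((g ^^ (n - i)) x)" using Suc by simp
  also have "n - i = Suc (n - Suc i)" using Suc.prems by simp
  also have "f ((g ^^ Suc (n - Suc i)) x) = (g ^^ (n - Suc i)) x" using closed by (simp add: fg)
  finally show ?case .
qed simp

locale bip_subshift =
  fixes M :: "'w measure" and th :: "'w \<Rightarrow> 'w" and l :: "'w \<Rightarrow> enat"
    and Amat :: "'w \<Rightarrow> nat \<Rightarrow> nat \<Rightarrow> bool"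
  assumes setting: "rsft_setting M th l Amat" and bip: "bip_property M th l Amat"
begin

abbreviation ti :: "'w \<Rightarrow> 'w" where "ti \<equiv> thinv M th"

lemma prob_space_M: "prob_space M"
  using setting by (simp add: rsft_setting_def invertible_mp_ergodic_def)

sublocale prob_space M by (rule prob_space_M)

lemma th_bij: "bij_betw th (space M) (space M)"
  and th_measurable[measurable]: "th \<in> measurable M M"
  and ti_measurable[measurable]: "ti \<in> measurable M M"
  and th_ergodic: "ergodic_mp M th"
  and l_measurable[measurable]: "l \<in> measurable M (count_space UNIV)"
  and l_gt_1: "\<And>w. w \<in> space M \<Longrightarrow> l w > 1"
  and Amat_sets: "\<And>i j. {w\<in>space M. Amat w i j} \<in> sets M"
  and rows: "AE w in M. \<forall>i. enat i < l w \<longrightarrow> (\<exists>j. enat j < l (th w) \<and> Amat w i j)"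
  using setting by (auto simp: rsft_setting_def invertible_mp_ergodic_def ergodic_mp_def)

lemma Amat_measurable[measurable]: "Measurable.pred M (\<lambda>w. Amat w i j)"
  using Amat_sets[of i j] by (simp add: pred_def)

lemma ti_space: "w \<in> space M \<Longrightarrow> ti w \<in> space M"
  using ti_measurable by (rule measurable_space)

lemma thn_space: "w \<in> space M \<Longrightarrow> (th ^^ n) w \<in> space M"
  using measurable_funpow[OF th_measurable] by (rule measurable_space)

lemma th_ti: "w \<in> space M \<Longrightarrow> th (ti w) = w"
  unfolding thinv_def using th_bij by (simp add: bij_betw_inv_into_right)

lemma ti_th: "w \<in> space M \<Longrightarrow> ti (th w) = w"
  unfolding thinv_def using th_bij by (simp add: bij_betw_def)

lemma th_tin: "w \<in> space M \<Longrightarrow> i \<le> n \<Longrightarrow> (th ^^ i) ((ti ^^ n) w) = (ti ^^ (n - i)) w"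
  by (rule funpow_cancel[of "space M"]) (auto simp: ti_space th_ti)

lemma ti_thn: "w \<in> space M \<Longrightarrow> i \<le> n \<Longrightarrow> (ti ^^ i) ((th ^^ n) w) = (th ^^ (n - i)) w"
  by (rule funpow_cancel[of "space M"]) (auto simp: measurable_space[OF th_measurable] ti_th)

lemma ti_ergodic: "ergodic_mp M ti"
  by (rule ergodic_mp_inverse[OF th_ergodic ti_measurable]) (simp_all add: ti_th th_ti)

lemma th_preserving: "distr M M th = M" and ti_preserving: "distr M M ti = M"
  using th_ergodic ti_ergodic by (simp_all add: ergodic_mp_def)

lemma Omega_w_single: "w \<in> Omega_w M th l Amat [a] \<longleftrightarrow> w \<in> space M \<and> enat a < l w"
  by (auto simp: Omega_w_def admissible_def)

lemma zero_symbol: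
  assumes "w \<in> space M" shows "enat 0 < l w"
proof -
  have "(0::enat) < l w" using l_gt_1[OF assms] by (meson order.strict_trans zero_less_one)
  then show ?thesis by (simp add: zero_enat_def)
qed

lemma in_W1_zero: "in_W1 M th l Amat 0"
proof -
  have "Omega_w M th l Amat [0] = space M" by (auto simp: Omega_w_single zero_symbol)
  then show ?thesis by (simp add: in_W1_def prob_space)
qed

lemma present_symbols_in_W1: "AE w in M. \<forall>d. enat d < l w \<longrightarrow> in_W1 M th l Amat d"
proof -
  have "AE w in M. enat d < l w \<longrightarrow> in_W1 M th l Amat d" for d
  proof (cases "in_W1 M th l Amat d")
    case False
    have Omega_sets: "Omega_w M th l Amat [d] \<in> sets M"
    proof -
      have "Omega_w M th l Amat [d] = {w \<in> space M. enat d < l w}" by (auto simp: Omega_w_single)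
      also have "\<dots> \<in> sets M" by measurable
      finally show ?thesis .
    qed
    have "measure M (Omega_w M th l Amat [d]) = 0"
      using False measure_nonneg[of M] unfolding in_W1_def by (meson not_less order.antisym)
    then have "Omega_w M th l Amat [d] \<in> null_sets M"
      using Omega_sets by (simp add: emeasure_eq_measure null_sets_def)
    from AE_not_in[OF this] AE_space show ?thesis
      by eventually_elim (auto simp: Omega_w_single)
  qed simp
  then show ?thesis by (simp add: AE_all_countable)
qed

definition adm_path :: "'w \<Rightarrow> (nat \<Rightarrow> nat) \<Rightarrow> nat \<Rightarrow> bool" where
  "adm_path w x n \<longleftrightarrow> (\<forall>i\<le>n. enat (x i) < l ((th ^^ i) w)) \<and>
      (\<forall>i<n. Amat ((th ^^ i) w) (x i) (x (Suc i)))"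

lemma words_ab_of_path:
  assumes "0 < n" "adm_path w x n"
  shows "words_ab th l Amat n w (x 0) (x n) \<noteq> {}"
proof -
  define u where "u = map x [0..<n]"
  have "n - 1 < n" using assms(1) by simp
  then have "Amat ((th ^^ (n - 1)) w) (x (n - 1)) (x (Suc (n - 1)))"
    using assms(2) unfolding adm_path_def by blast
  then have last_edge: "Amat ((th ^^ (n - 1)) w) (x (n - 1)) (x n)" using assms(1) by simp
  have "admissible th l Amat w u"
    using assms(2) unfolding admissible_def adm_path_def u_def by auto
  then have "u \<in> words_ab th l Amat n w (x 0) (x n)"
    using assms(1) last_edge by (simp add: words_ab_def words_def u_def hd_map last_map)
  then show ?thesis by blast
qed

lemma adm_path_drop:
  assumes "adm_path w x n" "j \<le> n"
  shows "adm_path ((th ^^ j) w) (\<lambda>i. x (i + j)) (n - j)"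
  using assms unfolding adm_path_def by (auto simp: funpow_apply_add)

lemma adm_path_append:
  assumes y: "adm_path w y m" and x: "adm_path ((th ^^ Suc m) w) x k"
    and edge: "Amat ((th ^^ m) w) (y m) (x 0)"
  shows "adm_path w (\<lambda>i. if i \<le> m then y i else x (i - Suc m)) (Suc m + k)"
proof -
  have x_at: "(th ^^ (i - Suc m)) ((th ^^ Suc m) w) = (th ^^ i) w" if "\<not> i \<le> m" for i
    using that by (simp only: funpow_apply_add) simp
  show ?thesis unfolding adm_path_def
  proof (intro conjI allI impI)
    fix i
    assume i: "i \<le> Suc m + k"
    show "enat (if i \<le> m then y i else x (i - Suc m)) < l ((th ^^ i) w)"
    proof (cases "i \<le> m")
      case True
      then show ?thesis using y unfolding adm_path_def by auto
    next
      case False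
      then have "i - Suc m \<le> k" using i by simp
      then have "enat (x (i - Suc m)) < l ((th ^^ (i - Suc m)) ((th ^^ Suc m) w))"
        using x unfolding adm_path_def by blast
      then show ?thesis using False unfolding x_at[OF False] by simp
    qed
  next
    fix i
    assume i: "i < Suc m + k"
    consider "Suc i \<le> m" | "i = m" | "\<not> i \<le> m" by linarith
    then show "Amat ((th ^^ i) w) (if i \<le> m then y i else x (i - Suc m))
        (if Suc i \<le> m then y (Suc i) else x (Suc i - Suc m))"
    proof cases
      case 1
      then show ?thesis using y unfolding adm_path_def by auto
    next
      case 2
      then show ?thesis using edge by simp
    next
      case 3
      then have "i - Suc m < k" using i by simp
      then have "Amat ((th ^^ (i - Suc m)) ((th ^^ Suc m) w)) (x (i - Suc m)) (x (Suc (i - Suc m)))"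
        using x unfolding adm_path_def by blast
      moreover have "Suc i - Suc m = Suc (i - Suc m)" using 3 by simp
      ultimately show ?thesis using 3 unfolding x_at[OF 3] by simp
    qed
  qed
qed

lemma adm_path_extend:
  assumes succ: "\<forall>i<s. \<forall>c. enat c < l ((th ^^ i) v) \<longrightarrow>
      (\<exists>e. enat e < l (th ((th ^^ i) v)) \<and> Amat ((th ^^ i) v) c e)"
    and b: "enat b < l v"
  shows "\<exists>y. adm_path v y s \<and> y 0 = b"
  using succ
proof (induction s)
  case 0
  then show ?case using b by (intro exI[of _ "\<lambda>_. b"]) (simp add: adm_path_def)
next
  case (Suc s)
  then obtain y where y: "adm_path v y s" "y 0 = b" by auto
  have "enat (y s) < l ((th ^^ s) v)" using y(1) unfolding adm_path_def by auto
  then obtain e where e: "enat e < l (th ((th ^^ s) v))" "Amat ((th ^^ s) v) (y s) e"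
    using Suc.prems by blast
  have "adm_path v (y(Suc s := e)) (Suc s)"
    using y(1) e unfolding adm_path_def by (auto simp: le_Suc_eq less_Suc_eq)
  moreover have "(y(Suc s := e)) 0 = b" using y(2) by simp
  ultimately show ?case by blast
qed

lemma words_ab_glue:
  assumes y: "adm_path w y m" and x: "adm_path ((th ^^ Suc m) w) x k"
    and edge: "Amat ((th ^^ m) w) (y m) (x 0)"
  shows "words_ab th l Amat (Suc m + k) w (y 0) (x k) \<noteq> {}"
  using words_ab_of_path[OF _ adm_path_append[OF y x edge]] by simp

definition mixing_bound :: "nat \<Rightarrow> nat \<Rightarrow> ('w \<Rightarrow> nat) \<Rightarrow> bool" where
  "mixing_bound a b N \<longleftrightarrow> (\<forall>w\<in>space M. enat a < l w \<longrightarrow>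
     (\<forall>n\<ge>N w. enat b < l ((th ^^ n) w) \<longrightarrow> (\<exists>x. adm_path w x n \<and> x 0 = a \<and> x n = b)))"

lemma mixing_bound_exists:
  assumes "in_W1 M th l Amat a" "in_W1 M th l Amat b"
  shows "\<exists>N. N \<in> measurable M (count_space UNIV) \<and> mixing_bound a b N"
proof -
  from bip assms obtain N where N: "N \<in> measurable M (count_space UNIV)"
    "\<forall>w \<in> Omega_w M th l Amat [a]. \<forall>n \<ge> N w.
       (th ^^ n) w \<in> Omega_w M th l Amat [b] \<longrightarrow>
       cylinder th l Amat w [a] \<inter> (shiftn n -` cylinder th l Amat ((th ^^ n) w) [b]) \<noteq> {}"
    unfolding bip_property_def top_mixing_def by blast
  have "\<exists>x. adm_path w x n \<and> x 0 = a \<and> x n = b"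
    if "w \<in> space M" "enat a < l w" "N w \<le> n" "enat b < l ((th ^^ n) w)" for w n
  proof -
    have "cylinder th l Amat w [a] \<inter> (shiftn n -` cylinder th l Amat ((th ^^ n) w) [b]) \<noteq> {}"
      using N(2) that by (simp add: Omega_w_single thn_space)
    then obtain x where x: "x \<in> cylinder th l Amat w [a]"
      "shiftn n x \<in> cylinder th l Amat ((th ^^ n) w) [b]"
      by blast
    then show ?thesis
      by (intro exI[of _ x]) (auto simp: cylinder_def fibre_def adm_path_def shiftn_def)
  qed
  with N(1) show ?thesis unfolding mixing_bound_def by blast
qed

text \<open>A measurable choice of mixing times N_ab (arbitrary if a or b is not in W^1).\<close>

definition mixing_time :: "nat \<Rightarrow> nat \<Rightarrow> 'w \<Rightarrow> nat" where
  "mixing_time a b = (SOME N. N \<in> measurable M (count_space UNIV) \<and>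
     (in_W1 M th l Amat a \<and> in_W1 M th l Amat b \<longrightarrow> mixing_bound a b N))"

lemma mixing_time_spec:
  "mixing_time a b \<in> measurable M (count_space UNIV) \<and>
     (in_W1 M th l Amat a \<and> in_W1 M th l Amat b \<longrightarrow> mixing_bound a b (mixing_time a b))"
proof -
  have "\<exists>N. N \<in> measurable M (count_space UNIV) \<and>
      (in_W1 M th l Amat a \<and> in_W1 M th l Amat b \<longrightarrow> mixing_bound a b N)"
  proof (cases "in_W1 M th l Amat a \<and> in_W1 M th l Amat b")
    case True
    then show ?thesis using mixing_bound_exists by blast
  next
    case False
    then show ?thesis by (intro exI[of _ "\<lambda>_. 0"]) auto
  qed
  then show ?thesis unfolding mixing_time_def by (rule someI_ex)
qed

lemma mixing_time_measurable[measurable]: "mixing_time a b \<in> measurable M (count_space UNIV)"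
  using mixing_time_spec by blast

lemma mixing_time_path:
  assumes "in_W1 M th l Amat a" "in_W1 M th l Amat b" "w \<in> space M" "enat a < l w"
    "mixing_time a b w \<le> n" "enat b < l ((th ^^ n) w)"
  shows "\<exists>x. adm_path w x n \<and> x 0 = a \<and> x n = b"
proof -
  have "mixing_bound a b (mixing_time a b)" using mixing_time_spec[of a b] assms(1,2) by blast
  then show ?thesis using assms(3-6) unfolding mixing_bound_def by blast
qed

text \<open>Almost surely every symbol of the fibre has admissible pasts of every length: use
  mixing from the symbol 0 at the times, recurring under theta^-1, where its mixing time into
  the symbol is bounded.\<close>

lemma admissible_pasts:
  "AE w in M. \<forall>b k. enat b < l w \<longrightarrow> (\<exists>x. adm_path ((ti ^^ k) w) x k \<and> x k = b)"
proof -
  have "AE w in M. in_W1 M th l Amat b \<longrightarrow>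
      (\<forall>k. enat b < l w \<longrightarrow> (\<exists>x. adm_path ((ti ^^ k) w) x k \<and> x k = b))" for b
  proof (cases "in_W1 M th l Amat b")
    case b: True
    define A where "A L = {w \<in> space M. mixing_time 0 b w \<le> L}" for L
    have A_sets: "A L \<in> sets M" for L unfolding A_def by measurable
    have cover: "space M \<subseteq> (\<Union>L. A L)" unfolding A_def by blast
    have "\<exists>L. measure M (A L) > 0"
      by (rule positive_measure_cover[of "space M" A]) (use A_sets cover prob_space in auto)
    then obtain L where L: "measure M (A L) > 0" by blast
    have visits: "AE w in M. \<forall>m. \<exists>n\<ge>m. (ti ^^ n) w \<in> A L"
      by (rule ergodic_recurrence[OF prob_space_M ti_ergodic A_sets L])
    show ?thesis using visits AE_space
    proof eventually_elim
      case (elim v)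
      have "\<exists>x. adm_path ((ti ^^ k) v) x k \<and> x k = b" if b_v: "enat b < l v" for k
      proof -
        obtain n where n: "max k L \<le> n" "(ti ^^ n) v \<in> A L" using elim(1) by blast
        define w where "w = (ti ^^ n) v"
        have w: "w \<in> space M" "mixing_time 0 b w \<le> n" using n unfolding w_def A_def by auto
        have "(th ^^ n) w = v" using th_tin[OF elim(2), of n n] by (simp add: w_def)
        then obtain x where x: "adm_path w x n" "x n = b"
          using mixing_time_path[OF in_W1_zero b w(1) zero_symbol[OF w(1)] w(2)] b_v by auto
        have "adm_path ((th ^^ (n - k)) w) (\<lambda>i. x (i + (n - k))) k"
          using adm_path_drop[OF x(1), of "n - k"] n(1) by simp
        moreover have "(th ^^ (n - k)) w = (ti ^^ k) v"
          using th_tin[OF elim(2), of "n - k" n] n(1) by (simp add: w_def)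
        ultimately show ?thesis
          using x(2) n(1) by (intro exI[of _ "\<lambda>i. x (i + (n - k))"]) simp
      qed
      then show ?case by blast
    qed
  qed simp
  then have "AE w in M. \<forall>b. in_W1 M th l Amat b \<longrightarrow>
      (\<forall>k. enat b < l w \<longrightarrow> (\<exists>x. adm_path ((ti ^^ k) w) x k \<and> x k = b))"
    by (simp add: AE_all_countable)
  then show ?thesis using present_symbols_in_W1 by eventually_elim blast
qed

definition preimage_gate :: "nat \<Rightarrow> 'w set" where
  "preimage_gate K = {w \<in> space M. \<forall>c. enat c < l w \<longrightarrow>
     (\<exists>d\<le>K. enat d < l (ti w) \<and> Amat (ti w) d c)}"

definition image_gate :: "nat \<Rightarrow> 'w set" where
  "image_gate K = {w \<in> space M. \<forall>c. enat c < l (ti w) \<longrightarrow>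
     (\<exists>d\<le>K. enat d < l w \<and> Amat (ti w) c d)}"

lemma preimage_gate_sets: "preimage_gate K \<in> sets M"
  unfolding preimage_gate_def by measurable

lemma image_gate_sets: "image_gate K \<in> sets M"
  unfolding image_gate_def by measurable

lemma preimage_gate_predecessor:
  "v \<in> preimage_gate K \<Longrightarrow> enat c < l v \<Longrightarrow> \<exists>d\<le>K. enat d < l (ti v) \<and> Amat (ti v) d c"
  unfolding preimage_gate_def by blast

lemma image_gate_successor:
  "u \<in> image_gate K \<Longrightarrow> enat c < l (ti u) \<Longrightarrow> \<exists>d\<le>K. enat d < l u \<and> Amat (ti u) c d"
  unfolding image_gate_def by blast

lemma preimage_gate_positive: "\<exists>K. measure M (preimage_gate K) > 0"
proof -
  from bip obtain Obp I where Obp: "Obp \<in> sets M" "measure M Obp > 0"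
    and I: "\<forall>w \<in> Obp. finite (I w) \<and> (\<forall>b \<in> I w. enat b < l (ti w)) \<and>
      (\<forall>c. enat c < l w \<longrightarrow> (\<exists>b \<in> I w. Amat (ti w) b c))"
    unfolding bip_property_def big_preimage_def by blast
  have "Obp \<subseteq> (\<Union>K. preimage_gate K)"
  proof
    fix w assume w: "w \<in> Obp"
    then obtain K where "\<forall>b\<in>I w. b \<le> K" using I finite_nat_set_iff_bounded_le by blast
    then have "w \<in> preimage_gate K"
      using w I sets.sets_into_space[OF Obp(1)] unfolding preimage_gate_def by fastforce
    then show "w \<in> (\<Union>K. preimage_gate K)" by blast
  qed
  then show ?thesis by (rule positive_measure_cover[OF Obp preimage_gate_sets])
qed

lemma image_gate_positive: "\<exists>K. measure M (image_gate K) > 0"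
proof -
  from bip obtain Obi I where Obi: "Obi \<in> sets M" "measure M Obi > 0"
    and I: "\<forall>w \<in> Obi. finite (I w) \<and> (\<forall>b \<in> I w. enat b < l w) \<and>
      (\<forall>c. enat c < l (ti w) \<longrightarrow> (\<exists>b \<in> I w. Amat (ti w) c b))"
    unfolding bip_property_def big_image_def by blast
  have "Obi \<subseteq> (\<Union>K. image_gate K)"
  proof
    fix w assume w: "w \<in> Obi"
    then obtain K where "\<forall>b\<in>I w. b \<le> K" using I finite_nat_set_iff_bounded_le by blast
    then have "w \<in> image_gate K"
      using w I sets.sets_into_space[OF Obi(1)] unfolding image_gate_def by fastforce
    then show "w \<in> (\<Union>K. image_gate K)" by blast
  qed
  then show ?thesis by (rule positive_measure_cover[OF Obi image_gate_sets])
qed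

text \<open>The core of part (i) for a single fibre w: if the orbit of w passes a preimage gate at
  time m + 1 and the mixing times from a to the gate symbols are at most m, then every symbol b
  at a time n > m is reached from a: mix from a to a gate symbol d at time m, then follow an
  admissible past of b that starts at time m + 1.\<close>

lemma forward_word_through_gate:
  assumes a: "in_W1 M th l Amat a" and w: "w \<in> space M" "enat a < l w"
    and gate: "(th ^^ Suc m) w \<in> preimage_gate K"
    and mix_bounded: "\<forall>d\<le>K. mixing_time a d w \<le> m"
    and pasts: "\<forall>n b k. enat b < l ((th ^^ n) w) \<longrightarrow>
      (\<exists>x. adm_path ((ti ^^ k) ((th ^^ n) w)) x k \<and> x k = b)"
    and symbols: "\<forall>n d. enat d < l ((th ^^ n) w) \<longrightarrow> in_W1 M th l Amat d"
    and n: "Suc m \<le> n" and b: "enat b < l ((th ^^ n) w)"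
  shows "words_ab th l Amat n w a b \<noteq> {}"
proof -
  define k where "k = n - Suc m"
  have fibre: "(ti ^^ k) ((th ^^ n) w) = (th ^^ Suc m) w"
    using ti_thn[OF w(1), of k n] n by (simp add: k_def)
  obtain x where x_past: "adm_path ((ti ^^ k) ((th ^^ n) w)) x k" and x_end: "x k = b"
    using pasts b by blast
  have x: "adm_path ((th ^^ Suc m) w) x k" using x_past unfolding fibre .
  have prev_fibre: "ti ((th ^^ Suc m) w) = (th ^^ m) w" using ti_th[OF thn_space[OF w(1)]] by simp
  have "enat (x 0) < l ((th ^^ 0) ((th ^^ Suc m) w))" using x unfolding adm_path_def by blast
  then have "enat (x 0) < l ((th ^^ Suc m) w)" by simp
  from preimage_gate_predecessor[OF gate this]
  obtain d where d: "d \<le> K" "enat d < l ((th ^^ m) w)" "Amat ((th ^^ m) w) d (x 0)"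
    unfolding prev_fibre by blast
  have d_W1: "in_W1 M th l Amat d" using symbols d(2) by blast
  have mix: "mixing_time a d w \<le> m" using mix_bounded d(1) by blast
  obtain y where y: "adm_path w y m" "y 0 = a" "y m = d"
    using mixing_time_path[OF a d_W1 w mix d(2)] by blast
  have "words_ab th l Amat (Suc m + k) w (y 0) (x k) \<noteq> {}"
    by (rule words_ab_glue[OF y(1) x]) (simp add: y(3) d(3))
  then show ?thesis using y(2) x_end n by (simp add: k_def)
qed

text \<open>Part (i): almost every orbit passes a preimage gate after all mixing times from a to
  the gate symbols have elapsed.\<close>

lemma forward_words:
  assumes a: "in_W1 M th l Amat a"
  shows "AE w in M. w \<in> Omega_w M th l Amat [a] \<longrightarrow>
    (\<exists>al. \<forall>n\<ge>al. \<forall>b. enat b < l ((th ^^ n) w) \<longrightarrow> words_ab th l Amat n w a b \<noteq> {})"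
proof -
  obtain K where K: "measure M (preimage_gate K) > 0" using preimage_gate_positive by blast
  have visits: "AE w in M. \<forall>m. \<exists>n\<ge>m. (th ^^ n) w \<in> preimage_gate K"
    by (rule ergodic_recurrence[OF prob_space_M th_ergodic preimage_gate_sets K])
  have pasts: "AE w in M. \<forall>n b k. enat b < l ((th ^^ n) w) \<longrightarrow>
      (\<exists>x. adm_path ((ti ^^ k) ((th ^^ n) w)) x k \<and> x k = b)"
    using AE_along_orbit[OF th_measurable th_preserving admissible_pasts] by simp
  have symbols: "AE w in M. \<forall>n d. enat d < l ((th ^^ n) w) \<longrightarrow> in_W1 M th l Amat d"
    using AE_along_orbit[OF th_measurable th_preserving present_symbols_in_W1] by simp
  show ?thesis using visits pasts symbols
  proof eventually_elim
    case (elim w)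
    show ?case
    proof
      assume "w \<in> Omega_w M th l Amat [a]"
      then have w: "w \<in> space M" "enat a < l w" by (simp_all add: Omega_w_single)
      define S where "S = (\<Sum>d\<le>K. mixing_time a d w)"
      obtain t where t: "Suc S \<le> t" "(th ^^ t) w \<in> preimage_gate K" using elim(1) by blast
      then obtain m where m: "t = Suc m" "S \<le> m" by (cases t) auto
      have gate: "(th ^^ Suc m) w \<in> preimage_gate K" using t(2) unfolding m(1) .
      have mix_bounded: "\<forall>d\<le>K. mixing_time a d w \<le> m"
      proof (intro allI impI)
        fix d assume "d \<le> K"
        then have "mixing_time a d w \<le> S" unfolding S_def by (intro member_le_sum) auto
        then show "mixing_time a d w \<le> m" using m(2) by linarith
      qed
      show "\<exists>al. \<forall>n\<ge>al. \<forall>b. enat b < l ((th ^^ n) w) \<longrightarrow> words_ab th l Amat n w a b \<noteq> {}"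
        using forward_word_through_gate[OF a w gate mix_bounded elim(2,3)] by blast
    qed
  qed
qed

text \<open>The core of part (ii) for a single fibre w: if the backward orbit of w passes an image
  gate at time -j and the mixing times from the gate symbols to a are at most j, then every
  symbol b at a time -n < -j reaches a: extend b forward up to time -j - 1 (every row of the
  matrix contains a 1), step into a gate symbol d at time -j and mix from d to a.\<close>

lemma backward_word_through_gate:
  assumes a: "in_W1 M th l Amat a" and w: "w \<in> space M" "enat a < l w"
    and gate: "(ti ^^ j) w \<in> image_gate K"
    and mix_bounded: "\<forall>d\<le>K. mixing_time d a ((ti ^^ j) w) \<le> j"
    and succ: "\<forall>n c. enat c < l ((ti ^^ n) w) \<longrightarrow>
      (\<exists>e. enat e < l (th ((ti ^^ n) w)) \<and> Amat ((ti ^^ n) w) c e)"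
    and symbols: "\<forall>n d. enat d < l ((ti ^^ n) w) \<longrightarrow> in_W1 M th l Amat d"
    and n: "Suc j \<le> n" and b: "enat b < l ((ti ^^ n) w)"
  shows "words_ab th l Amat n ((ti ^^ n) w) b a \<noteq> {}"
proof -
  define u where "u = (ti ^^ j) w"
  define v where "v = (ti ^^ n) w"
  define s where "s = n - Suc j"
  have u_space: "u \<in> space M"
    using gate sets.sets_into_space[OF image_gate_sets] unfolding u_def by blast
  have orbit: "(th ^^ i) v = (ti ^^ (n - i)) w" if "i \<le> n" for i
    unfolding v_def using th_tin[OF w(1) that] .
  have "\<forall>i<s. \<forall>c. enat c < l ((th ^^ i) v) \<longrightarrow>
      (\<exists>e. enat e < l (th ((th ^^ i) v)) \<and> Amat ((th ^^ i) v) c e)"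
  proof (intro allI impI)
    fix i c assume "i < s" "enat c < l ((th ^^ i) v)"
    moreover have "(th ^^ i) v = (ti ^^ (n - i)) w" using \<open>i < s\<close> by (intro orbit) (simp add: s_def)
    ultimately show "\<exists>e. enat e < l (th ((th ^^ i) v)) \<and> Amat ((th ^^ i) v) c e"
      using succ by simp
  qed
  moreover have "enat b < l v" using b by (simp add: v_def)
  ultimately obtain y where y: "adm_path v y s" "y 0 = b" using adm_path_extend by blast
  have s_fibre: "(th ^^ s) v = ti u" using orbit[of s] n by (simp add: s_def u_def Suc_diff_le)
  have gate_fibre: "(th ^^ Suc s) v = u" using orbit[of "Suc s"] n by (simp add: s_def u_def)
  have "enat (y s) < l ((th ^^ s) v)" using y(1) unfolding adm_path_def by blast
  from image_gate_successor[OF gate[folded u_def] this[unfolded s_fibre]]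
  obtain d where d: "d \<le> K" "enat d < l u" "Amat ((th ^^ s) v) (y s) d"
    unfolding s_fibre by blast
  have d_W1: "in_W1 M th l Amat d" using symbols d(2) unfolding u_def by blast
  have mix: "mixing_time d a u \<le> j" using mix_bounded d(1) unfolding u_def by blast
  have "(th ^^ j) u = w" using th_tin[OF w(1), of j j] by (simp add: u_def)
  then have "enat a < l ((th ^^ j) u)" using w(2) by simp
  then obtain x where x: "adm_path u x j" "x 0 = d" "x j = a"
    using mixing_time_path[OF d_W1 a u_space d(2) mix] by blast
  have x': "adm_path ((th ^^ Suc s) v) x j" using x(1) unfolding gate_fibre .
  have "words_ab th l Amat (Suc s + j) v (y 0) (x j) \<noteq> {}"
    by (rule words_ab_glue[OF y(1) x']) (simp add: x(2) d(3))
  then show ?thesis using y(2) x(3) n by (simp add: v_def s_def)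
qed

text \<open>Part (ii): almost every backward orbit passes an image gate at a time j beyond the
  mixing times from the gate symbols to a there; such fibres have positive measure for a
  suitable bound L on these mixing times.\<close>

lemma backward_words:
  assumes a: "in_W1 M th l Amat a"
  shows "AE w in M. w \<in> Omega_w M th l Amat [a] \<longrightarrow>
    (\<exists>be. \<forall>n\<ge>be. \<forall>b. enat b < l ((ti ^^ n) w) \<longrightarrow> words_ab th l Amat n ((ti ^^ n) w) b a \<noteq> {})"
proof -
  obtain K where K: "measure M (image_gate K) > 0" using image_gate_positive by blast
  define H where "H L = {u \<in> image_gate K. \<forall>d\<le>K. mixing_time d a u \<le> L}" for L
  have H_sets: "H L \<in> sets M" for L
  proof -
    have "H L = image_gate K \<inter> {u \<in> space M. \<forall>d\<le>K. mixing_time d a u \<le> L}"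
      unfolding H_def using sets.sets_into_space[OF image_gate_sets] by auto
    also have "\<dots> \<in> sets M" by (intro sets.Int image_gate_sets) measurable
    finally show ?thesis .
  qed
  have cover: "image_gate K \<subseteq> (\<Union>L. H L)"
  proof
    fix u assume "u \<in> image_gate K"
    then have "u \<in> H (\<Sum>d\<le>K. mixing_time d a u)" unfolding H_def by (auto intro!: member_le_sum)
    then show "u \<in> (\<Union>L. H L)" by blast
  qed
  have "\<exists>L. measure M (H L) > 0"
    by (rule positive_measure_cover[of "image_gate K" H]) (use image_gate_sets K H_sets cover in auto)
  then obtain L where L: "measure M (H L) > 0" by blast
  have visits: "AE w in M. \<forall>m. \<exists>n\<ge>m. (ti ^^ n) w \<in> H L"
    by (rule ergodic_recurrence[OF prob_space_M ti_ergodic H_sets L])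
  have succ: "AE w in M. \<forall>n c. enat c < l ((ti ^^ n) w) \<longrightarrow>
      (\<exists>e. enat e < l (th ((ti ^^ n) w)) \<and> Amat ((ti ^^ n) w) c e)"
    using AE_along_orbit[OF ti_measurable ti_preserving rows] by simp
  have symbols: "AE w in M. \<forall>n d. enat d < l ((ti ^^ n) w) \<longrightarrow> in_W1 M th l Amat d"
    using AE_along_orbit[OF ti_measurable ti_preserving present_symbols_in_W1] by simp
  show ?thesis using visits succ symbols
  proof eventually_elim
    case (elim w)
    show ?case
    proof
      assume "w \<in> Omega_w M th l Amat [a]"
      then have w: "w \<in> space M" "enat a < l w" by (simp_all add: Omega_w_single)
      obtain j where j: "L \<le> j" "(ti ^^ j) w \<in> H L" using elim(1) by blast
      then have gate: "(ti ^^ j) w \<in> image_gate K"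
        and mix_bounded: "\<forall>d\<le>K. mixing_time d a ((ti ^^ j) w) \<le> j"
        unfolding H_def by (auto intro: order_trans)
      show "\<exists>be. \<forall>n\<ge>be. \<forall>b. enat b < l ((ti ^^ n) w) \<longrightarrow>
          words_ab th l Amat n ((ti ^^ n) w) b a \<noteq> {}"
        using backward_word_through_gate[OF a w gate mix_bounded elim(2,3)] by blast
    qed
  qed
qed

end

theorem lemma3p2:
  fixes M :: "'w measure" and th :: "'w \<Rightarrow> 'w" and l :: "'w \<Rightarrow> enat"
    and Amat :: "'w \<Rightarrow> nat \<Rightarrow> nat \<Rightarrow> bool" and a :: nat
  assumes "rsft_setting M th l Amat"
    and "bip_property M th l Amat"
    and "in_W1 M th l Amat a"
  shows "AE w in M. w \<in> Omega_w M th l Amat [a] \<longrightarrow>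
           (\<exists>al be :: nat.
              (\<forall>n \<ge> al. \<forall>b. enat b < l ((th ^^ n) w) \<longrightarrow> words_ab th l Amat n w a b \<noteq> {}) \<and>
              (\<forall>n \<ge> be. \<forall>b. enat b < l ((thinv M th ^^ n) w) \<longrightarrow>
                   words_ab th l Amat n ((thinv M th ^^ n) w) b a \<noteq> {}))"
proof -
  interpret bip_subshift M th l Amat using assms(1,2) by unfold_locales
  show ?thesis
    using forward_words[OF assms(3)] backward_words[OF assms(3)] by eventually_elim blast
qed

end
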